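(* A weakly quasi-transitive digraph $D$ is chordal if and only if $S(D)$ is chordal and $D$ does not contain any of the digraphs $F_a, F_b, F_c, F_d$ described in the context as an induced subdigraph.
   Context: Digraphs are finite, have no loops and no multiple arcs, but may contain digons; an arc lying in a digon is called symmetric, otherwise non-symmetric. $N^-(v)$ / $N^+(v)$ denote the sets of in-/out-neighbours of $v$; two vertices are adjacent if there is at least one arc between them. A vertex $v$ is di-simplicial if for every $u \in N^-(v)$ and $w \in N^+(v)$ with $u \neq w$, $uw$ is an arc. A digraph is chordal if every induced subdigraph contains a di-simplicial vertex. $S(D)$ is the spanning subdigraph of $D$ consisting of all symmetric arcs of $D$. Two neighbours $u,w$ of $v$ are synchronous neighbours of $v$ if both lie in $N^-(v)\setminus N^+(v)$, or both in $N^+(v)\setminus N^-(v)$, or both in $N^-(v)\cap N^+(v)$; otherwise they are asynchronous. A digraph is weakly quasi-transitive if for each vertex $v$, any two asynchronous neighbours of $v$ are adjacent. The digraphs $F_a,F_b,F_c$ have vertex set $\{1,2,3,4\}$ with symmetric arcs $1\leftrightarrow 3$ and $2 \leftrightarrow 4$, plus: $F_a$: non-symmetric arcs $1\to2$, $2\to3$, $4\to1$ and symmetric arc $3\leftrightarrow4$; $F_b$: non-symmetric arcs $1\to2$, $2\to3$, $3\to4$, $4\to1$; $F_c$: non-symmetric arcs $1\to2$, $2\to3$, $4\to3$, $4\to1$. $F_d$ is the directed 3-cycle $1\to2\to3\to1$ with all arcs non-symmetric. *)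

theory Defs
  imports Main
begin

text \<open>A digraph is given by a finite vertex set V and an arc relation A \<subseteq> V \<times> V
  without loops (no multiple arcs since A is a set; digons allowed).\<close>

definition digraph :: "'a set \<Rightarrow> ('a \<times> 'a) set \<Rightarrow> bool" where
  "digraph V A \<longleftrightarrow> finite V \<and> A \<subseteq> V \<times> V \<and> (\<forall>v. (v, v) \<notin> A)"

definition in_nbrs :: "('a \<times> 'a) set \<Rightarrow> 'a \<Rightarrow> 'a set" where
  "in_nbrs A v = {u. (u, v) \<in> A}"

definition out_nbrs :: "('a \<times> 'a) set \<Rightarrow> 'a \<Rightarrow> 'a set" where
  "out_nbrs A v = {w. (v, w) \<in> A}"

definition adjacent :: "('a \<times> 'a) set \<Rightarrow> 'a \<Rightarrow> 'a \<Rightarrow> bool" where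
  "adjacent A u w \<longleftrightarrow> (u, w) \<in> A \<or> (w, u) \<in> A"

definition induced_arcs :: "('a \<times> 'a) set \<Rightarrow> 'a set \<Rightarrow> ('a \<times> 'a) set" where
  "induced_arcs A X = A \<inter> (X \<times> X)"

definition di_simplicial :: "('a \<times> 'a) set \<Rightarrow> 'a \<Rightarrow> bool" where
  "di_simplicial A v \<longleftrightarrow>
     (\<forall>u \<in> in_nbrs A v. \<forall>w \<in> out_nbrs A v. u \<noteq> w \<longrightarrow> (u, w) \<in> A)"

definition chordal :: "'a set \<Rightarrow> ('a \<times> 'a) set \<Rightarrow> bool" where
  "chordal V A \<longleftrightarrow>
     (\<forall>X. X \<subseteq> V \<longrightarrow> X \<noteq> {} \<longrightarrow> (\<exists>v \<in> X. di_simplicial (induced_arcs A X) v))"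

text \<open>S(D): spanning subdigraph of symmetric arcs (same vertex set V).\<close>
definition sym_arcs :: "('a \<times> 'a) set \<Rightarrow> ('a \<times> 'a) set" where
  "sym_arcs A = {(u, v). (u, v) \<in> A \<and> (v, u) \<in> A}"

definition synchronous :: "('a \<times> 'a) set \<Rightarrow> 'a \<Rightarrow> 'a \<Rightarrow> 'a \<Rightarrow> bool" where
  "synchronous A v u w \<longleftrightarrow>
     (u \<in> in_nbrs A v - out_nbrs A v \<and> w \<in> in_nbrs A v - out_nbrs A v) \<or>
     (u \<in> out_nbrs A v - in_nbrs A v \<and> w \<in> out_nbrs A v - in_nbrs A v) \<or>
     (u \<in> in_nbrs A v \<inter> out_nbrs A v \<and> w \<in> in_nbrs A v \<inter> out_nbrs A v)"

definition weakly_quasi_transitive :: "'a set \<Rightarrow> ('a \<times> 'a) set \<Rightarrow> bool" where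
  "weakly_quasi_transitive V A \<longleftrightarrow>
     (\<forall>v \<in> V. \<forall>u \<in> in_nbrs A v \<union> out_nbrs A v. \<forall>w \<in> in_nbrs A v \<union> out_nbrs A v.
        \<not> synchronous A v u w \<longrightarrow> adjacent A u w)"

definition contains_induced ::
  "'a set \<Rightarrow> ('a \<times> 'a) set \<Rightarrow> nat set \<Rightarrow> (nat \<times> nat) set \<Rightarrow> bool" where
  "contains_induced V A W F \<longleftrightarrow>
     (\<exists>f. inj_on f W \<and> f ` W \<subseteq> V \<and>
        (\<forall>i \<in> W. \<forall>j \<in> W. (f i, f j) \<in> A \<longleftrightarrow> (i, j) \<in> F))"

definition F_a :: "(nat \<times> nat) set" where
  "F_a = {(1,3),(3,1),(2,4),(4,2),(1,2),(2,3),(4,1),(3,4),(4,3)}"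

definition F_b :: "(nat \<times> nat) set" where
  "F_b = {(1,3),(3,1),(2,4),(4,2),(1,2),(2,3),(3,4),(4,1)}"

definition F_c :: "(nat \<times> nat) set" where
  "F_c = {(1,3),(3,1),(2,4),(4,2),(1,2),(2,3),(4,3),(4,1)}"

definition F_d :: "(nat \<times> nat) set" where
  "F_d = {(1,2),(2,3),(3,1)}"

end

theory Submission
  imports Defs
begin

text \<open>Necessity: chordality passes to S(D) and to induced copies, and none of F_a, F_b, F_c,
  F_d has a di-simplicial vertex.

  Sufficiency: all hypotheses are inherited by induced subdigraphs, so it suffices to find one
  di-simplicial vertex. Call x \<rightarrow> a \<rightarrow> y a detour if both arcs are non-symmetric and
  x, y form a digon. Excluding F_d makes non-symmetric 2-paths transitive and weak
  quasi-transitivity joins the ends of mixed 2-paths, so a vertex that is simplicial in S(D)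
  and neither starts nor ends a detour is di-simplicial. Excluding F_a, F_b, F_c forces every
  symmetric neighbour of the middle vertex a to lie between x and y; hence a has fewer
  out-neighbours than x and fewer in-neighbours than y. Chordality of S(D) lets us choose the
  middle vertex simplicial in S(D), and minimising first out-degrees and then in-degrees over
  such vertices produces a vertex as required.\<close>

section \<open>Chordality and induced subdigraphs\<close>

definition simplicial :: "('a \<times> 'a) set \<Rightarrow> 'a set \<Rightarrow> 'a \<Rightarrow> bool" where
  "simplicial E X v \<longleftrightarrow>
     (\<forall>u\<in>X. \<forall>w\<in>X. (u, v) \<in> E \<longrightarrow> (v, w) \<in> E \<longrightarrow> u \<noteq> w \<longrightarrow> (u, w) \<in> E)"

lemma di_simplicial_induced_arcs_iff:
  "v \<in> X \<Longrightarrow> di_simplicial (induced_arcs E X) v \<longleftrightarrow> simplicial E X v"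
  unfolding di_simplicial_def simplicial_def in_nbrs_def out_nbrs_def induced_arcs_def by auto

lemma chordal_simplicial:
  assumes "chordal V E" "Y \<subseteq> V" "Y \<noteq> {}"
  obtains v where "v \<in> Y" "simplicial E Y v"
proof -
  from assms obtain v where "v \<in> Y" "di_simplicial (induced_arcs E Y) v"
    unfolding chordal_def by blast
  with that show thesis
    by (simp add: di_simplicial_induced_arcs_iff)
qed

lemma chordal_subset: "chordal V E \<Longrightarrow> X \<subseteq> V \<Longrightarrow> chordal X E"
  unfolding chordal_def by (meson subset_trans)

lemma chordal_induced_arcs:
  assumes "chordal V E" "X \<subseteq> V"
  shows "chordal X (induced_arcs E X)"
proof -
  have "induced_arcs (induced_arcs E X) Y = induced_arcs E Y" if "Y \<subseteq> X" for Y
    using that unfolding induced_arcs_def by auto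
  then show ?thesis
    using assms unfolding chordal_def by auto
qed

lemma sym_arcs_induced_arcs: "sym_arcs (induced_arcs A X) = induced_arcs (sym_arcs A) X"
  unfolding sym_arcs_def induced_arcs_def by auto

lemma sym_sym_arcs: "sym (sym_arcs A)"
  unfolding sym_arcs_def sym_def by auto

lemma simplicial_sym_arcs: "simplicial A Y v \<Longrightarrow> simplicial (sym_arcs A) Y v"
  unfolding simplicial_def sym_arcs_def by blast

lemma chordal_sym_arcs:
  assumes "chordal V A"
  shows "chordal V (sym_arcs A)"
  unfolding chordal_def
proof (intro allI impI)
  fix Y assume "Y \<subseteq> V" "Y \<noteq> {}"
  with assms obtain v where "v \<in> Y" "simplicial A Y v"
    by (rule chordal_simplicial)
  then show "\<exists>v\<in>Y. di_simplicial (induced_arcs (sym_arcs A) Y) v"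
    by (auto simp: di_simplicial_induced_arcs_iff intro: simplicial_sym_arcs)
qed

lemma chordal_induced_copy:
  assumes "chordal V A" "contains_induced V A W F"
  shows "chordal W F"
  unfolding chordal_def
proof (intro allI impI)
  obtain f where f: "inj_on f W" "f ` W \<subseteq> V"
    and arcs: "\<forall>i\<in>W. \<forall>j\<in>W. (f i, f j) \<in> A \<longleftrightarrow> (i, j) \<in> F"
    using assms(2) unfolding contains_induced_def by blast
  fix Y assume Y: "Y \<subseteq> W" "Y \<noteq> {}"
  moreover have "f ` Y \<subseteq> V"
    using Y(1) f(2) by blast
  ultimately obtain v where "v \<in> f ` Y" "simplicial A (f ` Y) v"
    using assms(1) by (metis chordal_simplicial image_is_empty)
  then obtain i where i: "i \<in> Y" "simplicial A (f ` Y) (f i)"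
    by blast
  have "simplicial F Y i"
    unfolding simplicial_def
  proof (intro ballI impI)
    fix u w assume "u \<in> Y" "w \<in> Y" "(u, i) \<in> F" "(i, w) \<in> F" "u \<noteq> w"
    moreover from this have "f u \<noteq> f w"
      using f(1) Y(1) by (auto dest: inj_onD)
    moreover have "(f u, f i) \<in> A" "(f i, f w) \<in> A" "f u \<in> f ` Y" "f w \<in> f ` Y"
      using calculation i(1) Y(1) arcs by auto
    ultimately have "(f u, f w) \<in> A"
      using i(2) unfolding simplicial_def by blast
    then show "(u, w) \<in> F"
      using \<open>u \<in> Y\<close> \<open>w \<in> Y\<close> Y(1) arcs by auto
  qed
  with i(1) show "\<exists>v\<in>Y. di_simplicial (induced_arcs F Y) v"
    by (auto simp: di_simplicial_induced_arcs_iff)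
qed

lemma obstructions_not_chordal:
  "\<not> chordal {1,2,3,4} F_a" "\<not> chordal {1,2,3,4} F_b"
  "\<not> chordal {1,2,3,4} F_c" "\<not> chordal {1,2,3} F_d"
  unfolding chordal_def di_simplicial_def in_nbrs_def out_nbrs_def induced_arcs_def
    F_a_def F_b_def F_c_def F_d_def
  by (intro notI; drule spec[of _ "{1,2,3,4}"] spec[of _ "{1,2,3}"]; auto)+

lemma digraph_induced_arcs: "digraph V A \<Longrightarrow> X \<subseteq> V \<Longrightarrow> digraph X (induced_arcs A X)"
  unfolding digraph_def induced_arcs_def by (auto intro: finite_subset)

lemma in_nbrs_induced_arcs: "v \<in> X \<Longrightarrow> in_nbrs (induced_arcs A X) v = in_nbrs A v \<inter> X"
  unfolding in_nbrs_def induced_arcs_def by auto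

lemma out_nbrs_induced_arcs: "v \<in> X \<Longrightarrow> out_nbrs (induced_arcs A X) v = out_nbrs A v \<inter> X"
  unfolding out_nbrs_def induced_arcs_def by auto

lemma weakly_quasi_transitive_induced_arcs:
  assumes "weakly_quasi_transitive V A" "X \<subseteq> V"
  shows "weakly_quasi_transitive X (induced_arcs A X)"
  using assms
  unfolding weakly_quasi_transitive_def synchronous_def adjacent_def
  by (simp add: in_nbrs_induced_arcs out_nbrs_induced_arcs) (auto simp: induced_arcs_def)

lemma contains_induced_induced_arcs:
  assumes "contains_induced X (induced_arcs A X) W F" "X \<subseteq> V"
  shows "contains_induced V A W F"
proof -
  obtain f where f: "inj_on f W" "f ` W \<subseteq> X"
    and arcs: "\<forall>i\<in>W. \<forall>j\<in>W. (f i, f j) \<in> induced_arcs A X \<longleftrightarrow> (i, j) \<in> F"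
    using assms(1) unfolding contains_induced_def by blast
  then have "\<forall>i\<in>W. \<forall>j\<in>W. (f i, f j) \<in> A \<longleftrightarrow> (i, j) \<in> F"
    unfolding induced_arcs_def by blast
  with f assms(2) show ?thesis
    unfolding contains_induced_def by blast
qed

section \<open>Simplicial vertices of chordal graphs\<close>

lemma simplicial_remove_nonadjacent:
  assumes "simplicial E (X - {s}) v" "(v, s) \<notin> E" "(s, v) \<notin> E"
  shows "simplicial E X v"
  using assms unfolding simplicial_def by blast

lemma chordal_two_nonadjacent_simplicial:
  assumes "sym E" "finite X" "chordal X E" "u \<in> X" "w \<in> X" "u \<noteq> w" "(u, w) \<notin> E"
  shows "\<exists>s\<in>X. \<exists>t\<in>X. s \<noteq> t \<and> (s, t) \<notin> E \<and> simplicial E X s \<and> simplicial E X t"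
  using assms(2-)
proof (induction X arbitrary: u w rule: finite_psubset_induct)
  case (psubset X)
  obtain s where s: "s \<in> X" "simplicial E X s"
    using psubset.prems(1) subset_refl by (rule chordal_simplicial) (use psubset.prems(2) in blast)
  show ?case
  proof (cases "\<exists>u'\<in>X - {s}. \<exists>w'\<in>X - {s}. u' \<noteq> w' \<and> (u', w') \<notin> E")
    case True
    then obtain u' w' where uw': "u' \<in> X - {s}" "w' \<in> X - {s}" "u' \<noteq> w'" "(u', w') \<notin> E"
      by blast
    have "X - {s} \<subset> X" "chordal (X - {s}) E"
      using s(1) psubset.prems(1) by (auto intro: chordal_subset)
    from psubset.IH[OF this uw'] obtain t1 t2 where t: "t1 \<in> X - {s}" "t2 \<in> X - {s}"
      "t1 \<noteq> t2" "(t1, t2) \<notin> E" "simplicial E (X - {s}) t1" "simplicial E (X - {s}) t2"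
      by blast
    have "(s, t1) \<notin> E \<or> (s, t2) \<notin> E"
    proof (rule ccontr)
      assume "\<not> ?thesis"
      then have "(t1, s) \<in> E" "(s, t2) \<in> E"
        using assms(1) by (auto dest: symD)
      with s(2) t(1-3) have "(t1, t2) \<in> E"
        unfolding simplicial_def by blast
      with t(4) show False ..
    qed
    then obtain t where "t \<in> X - {s}" "(s, t) \<notin> E" "simplicial E (X - {s}) t"
      using t by blast
    moreover from this have "simplicial E X t"
      using assms(1) by (blast intro: simplicial_remove_nonadjacent dest: symD)
    ultimately show ?thesis
      using s by (intro bexI[of _ s] bexI[of _ t]) auto
  next
    case False
    then obtain q where q: "q \<in> X - {s}" "(s, q) \<notin> E"
      using psubset.prems(2-5) assms(1) by (blast dest: symD)
    have "simplicial E (X - {s}) q"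
      using False unfolding simplicial_def by blast
    then have "simplicial E X q"
      using q(2) assms(1) by (blast intro: simplicial_remove_nonadjacent dest: symD)
    then show ?thesis
      using s q by (intro bexI[of _ s] bexI[of _ q]) auto
  qed
qed

text \<open>In graph terms: every union C of components of X minus the closed neighbourhood
  of c contains a vertex that is simplicial in all of X.\<close>
lemma chordal_simplicial_beyond_nbhd:
  assumes "sym E" "finite X" "chordal X E" "c \<in> X" "C \<subseteq> X" "C \<noteq> {}"
    and away: "\<And>v. v \<in> C \<Longrightarrow> v \<noteq> c \<and> (c, v) \<notin> E"
    and closed: "\<And>u d. u \<in> C \<Longrightarrow> d \<in> X \<Longrightarrow> (u, d) \<in> E \<Longrightarrow> d \<in> C \<or> (c, d) \<in> E"
  shows "\<exists>v\<in>C. simplicial E X v"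
  using assms(2-6) closed
proof (induction X rule: finite_psubset_induct)
  case (psubset X)
  obtain u where "u \<in> C" "u \<in> X"
    using psubset.prems(3,4) by blast
  then obtain s where s: "s \<in> X" "s \<noteq> c" "simplicial E X s"
    using chordal_two_nonadjacent_simplicial[OF assms(1) psubset.hyps(1) psubset.prems(1,2)] away
    by metis
  show ?case
  proof (cases "s \<in> C")
    case True
    then show ?thesis using s by blast
  next
    case False
    have "X - {s} \<subset> X" "chordal (X - {s}) E"
      using s(1) psubset.prems(1) by (auto intro: chordal_subset)
    moreover have "c \<in> X - {s}" "C \<subseteq> X - {s}"
      using psubset.prems(2,3) s(2) False by auto
    moreover have "d \<in> C \<or> (c, d) \<in> E" if "u \<in> C" "d \<in> X - {s}" "(u, d) \<in> E" for u d
      using psubset.prems(5) that by blast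
    ultimately obtain v where v: "v \<in> C" "simplicial E (X - {s}) v"
      using psubset.IH[OF _ _ _ _ psubset.prems(4)] by blast
    have "(v, s) \<notin> E"
    proof
      assume "(v, s) \<in> E"
      \<comment> \<open>then s is a common neighbour of v and c, and s is simplicial\<close>
      then have "(c, s) \<in> E"
        using psubset.prems(5) v(1) s(1) False by blast
      with \<open>(v, s) \<in> E\<close> have "(v, c) \<in> E"
        using s(3) v(1) psubset.prems(2,3) away assms(1) unfolding simplicial_def
        by (blast dest: symD)
      then show False
        using away v(1) assms(1) by (blast dest: symD)
    qed
    then have "simplicial E X v"
      using v(2) assms(1) by (blast intro: simplicial_remove_nonadjacent dest: symD)
    then show ?thesis
      using v(1) by blast
  qed
qed

section \<open>Weakly quasi-transitive digraphs\<close>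

definition sym_arc :: "('a \<times> 'a) set \<Rightarrow> 'a \<Rightarrow> 'a \<Rightarrow> bool" where
  "sym_arc A x y \<longleftrightarrow> (x, y) \<in> A \<and> (y, x) \<in> A"

definition nonsym_arc :: "('a \<times> 'a) set \<Rightarrow> 'a \<Rightarrow> 'a \<Rightarrow> bool" where
  "nonsym_arc A x y \<longleftrightarrow> (x, y) \<in> A \<and> (y, x) \<notin> A"

locale wqt_digraph =
  fixes V :: "'a set" and A :: "('a \<times> 'a) set"
  assumes digraph: "digraph V A" and wqt: "weakly_quasi_transitive V A"
begin

lemma finite_V: "finite V"
  using digraph unfolding digraph_def by blast

lemma loop_free: "(v, v) \<notin> A"
  using digraph unfolding digraph_def by blast

lemma arc_in_V: "(u, v) \<in> A \<Longrightarrow> u \<in> V \<and> v \<in> V"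
  using digraph unfolding digraph_def by blast

lemma finite_out_nbrs: "finite (out_nbrs A v)"
  using finite_V arc_in_V unfolding out_nbrs_def by (blast intro: finite_subset)

lemma finite_in_nbrs: "finite (in_nbrs A v)"
  using finite_V arc_in_V unfolding in_nbrs_def by (blast intro: finite_subset)

lemma asynchronous_adjacent:
  assumes "v \<in> V" "u \<in> in_nbrs A v \<union> out_nbrs A v" "w \<in> in_nbrs A v \<union> out_nbrs A v"
    and "\<not> synchronous A v u w"
  shows "adjacent A u w"
  using wqt assms unfolding weakly_quasi_transitive_def by blast

lemma nonsym_path_adjacent: "nonsym_arc A u v \<Longrightarrow> nonsym_arc A v w \<Longrightarrow> adjacent A u w"
  by (rule asynchronous_adjacent[of v])
    (auto simp: nonsym_arc_def in_nbrs_def out_nbrs_def synchronous_def dest: arc_in_V)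

lemma nonsym_in_sym_adjacent: "nonsym_arc A u v \<Longrightarrow> sym_arc A v s \<Longrightarrow> adjacent A u s"
  by (rule asynchronous_adjacent[of v])
    (auto simp: nonsym_arc_def sym_arc_def in_nbrs_def out_nbrs_def synchronous_def dest: arc_in_V)

lemma nonsym_out_sym_adjacent: "nonsym_arc A v w \<Longrightarrow> sym_arc A v s \<Longrightarrow> adjacent A w s"
  by (rule asynchronous_adjacent[of v])
    (auto simp: nonsym_arc_def sym_arc_def in_nbrs_def out_nbrs_def synchronous_def dest: arc_in_V)

end

section \<open>Detours\<close>

definition detour :: "('a \<times> 'a) set \<Rightarrow> 'a \<Rightarrow> 'a \<Rightarrow> 'a \<Rightarrow> bool" where
  "detour A x a y \<longleftrightarrow> sym_arc A x y \<and> nonsym_arc A x a \<and> nonsym_arc A a y"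

locale obstruction_free_wqt_digraph = wqt_digraph +
  assumes chordal_sym: "chordal V (sym_arcs A)"
    and no_F_a: "\<not> contains_induced V A {1,2,3,4} F_a"
    and no_F_b: "\<not> contains_induced V A {1,2,3,4} F_b"
    and no_F_c: "\<not> contains_induced V A {1,2,3,4} F_c"
    and no_F_d: "\<not> contains_induced V A {1,2,3} F_d"
begin

abbreviation sym_simplicial :: "'a \<Rightarrow> bool" where
  "sym_simplicial v \<equiv> simplicial (sym_arcs A) V v"

lemma sym_simplicialD:
  assumes "sym_simplicial v" "sym_arc A u v" "sym_arc A v w" "u \<noteq> w"
  shows "sym_arc A u w"
  using assms arc_in_V unfolding simplicial_def sym_arcs_def sym_arc_def by blast

lemma nonsym_arc_trans:
  assumes uv: "nonsym_arc A u v" and vw: "nonsym_arc A v w"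
  shows "(u, w) \<in> A"
proof (rule ccontr)
  assume "(u, w) \<notin> A"
  with nonsym_path_adjacent[OF uv vw] have wu: "nonsym_arc A w u"
    unfolding adjacent_def nonsym_arc_def by blast
  define f where "f i = (if i = 1 then u else if i = 2 then v else w)" for i :: nat
  have "contains_induced V A {1,2,3} F_d"
    unfolding contains_induced_def
  proof (intro exI[of _ f] conjI)
    show "inj_on f {1,2,3}" "f ` {1,2,3} \<subseteq> V"
      using uv vw wu loop_free arc_in_V unfolding nonsym_arc_def f_def inj_on_def by auto
    show "\<forall>i\<in>{1,2,3}. \<forall>j\<in>{1,2,3}. (f i, f j) \<in> A \<longleftrightarrow> (i, j) \<in> F_d"
      using uv vw wu loop_free unfolding nonsym_arc_def f_def F_d_def by auto
  qed
  with no_F_d show False ..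
qed

text \<open>F_a, F_b and F_c are the three ways of joining the ends p3, p4 of this configuration.\<close>
lemma square_ends_nonadjacent:
  assumes "sym_arc A p1 p3" "sym_arc A p2 p4"
    and "nonsym_arc A p1 p2" "nonsym_arc A p2 p3" "nonsym_arc A p4 p1"
  shows "\<not> adjacent A p3 p4"
proof
  assume adj: "adjacent A p3 p4"
  define f where "f i = (if i = 1 then p1 else if i = 2 then p2 else if i = 3 then p3 else p4)"
    for i :: nat
  have f: "inj_on f {1,2,3,4}" "f ` {1,2,3,4} \<subseteq> V"
    using assms loop_free arc_in_V unfolding sym_arc_def nonsym_arc_def f_def inj_on_def by auto
  have copy: "contains_induced V A {1,2,3,4} F"
    if "\<forall>i\<in>{1,2,3,4}. \<forall>j\<in>{1,2,3,4}. (f i, f j) \<in> A \<longleftrightarrow> (i, j) \<in> F" for F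
    using f that unfolding contains_induced_def by blast
  have known: "(p1, p1) \<notin> A" "(p2, p2) \<notin> A" "(p3, p3) \<notin> A" "(p4, p4) \<notin> A"
    "(p1, p3) \<in> A" "(p3, p1) \<in> A" "(p2, p4) \<in> A" "(p4, p2) \<in> A"
    "(p1, p2) \<in> A" "(p2, p1) \<notin> A" "(p2, p3) \<in> A" "(p3, p2) \<notin> A"
    "(p4, p1) \<in> A" "(p1, p4) \<notin> A"
    using assms loop_free unfolding sym_arc_def nonsym_arc_def by auto
  consider "(p3, p4) \<in> A" "(p4, p3) \<in> A" | "(p3, p4) \<in> A" "(p4, p3) \<notin> A"
    | "(p3, p4) \<notin> A" "(p4, p3) \<in> A"
    using adj unfolding adjacent_def by blast
  then show False
  proof cases
    case 1
    then have "contains_induced V A {1,2,3,4} F_a"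
      using known by (intro copy) (auto simp: f_def F_a_def)
    with no_F_a show False ..
  next
    case 2
    then have "contains_induced V A {1,2,3,4} F_b"
      using known by (intro copy) (auto simp: f_def F_b_def)
    with no_F_b show False ..
  next
    case 3
    then have "contains_induced V A {1,2,3,4} F_c"
      using known by (intro copy) (auto simp: f_def F_c_def)
    with no_F_c show False ..
  qed
qed

lemma detour_sym_nbr:
  assumes detour: "detour A x a y" and ad: "sym_arc A a d"
  shows "(x, d) \<in> A \<and> (d, y) \<in> A"
proof -
  have xy: "sym_arc A x y" and xa: "nonsym_arc A x a" and ay: "nonsym_arc A a y"
    using detour unfolding detour_def by blast+
  have "adjacent A x d" "adjacent A y d"
    using nonsym_in_sym_adjacent[OF xa ad] nonsym_out_sym_adjacent[OF ay ad] .
  moreover have "sym_arc A y x" "sym_arc A d a"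
    using xy ad unfolding sym_arc_def by blast+
  ultimately show ?thesis
    using square_ends_nonadjacent[OF xy ad xa ay]
      square_ends_nonadjacent[OF ad \<open>sym_arc A y x\<close> ay _ xa]
    unfolding adjacent_def nonsym_arc_def by blast
qed

lemma di_simplicialI:
  assumes simpl: "sym_simplicial v"
    and no_out: "\<nexists>a p. detour A v a p" and no_in: "\<nexists>c a. detour A c a v"
  shows "di_simplicial A v"
  unfolding di_simplicial_def
proof (intro ballI impI)
  fix u w assume "u \<in> in_nbrs A v" "w \<in> out_nbrs A v" "u \<noteq> w"
  then have uv: "(u, v) \<in> A" and vw: "(v, w) \<in> A"
    unfolding in_nbrs_def out_nbrs_def by blast+
  consider "sym_arc A u v" "sym_arc A v w" | "sym_arc A u v" "nonsym_arc A v w"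
    | "nonsym_arc A u v" "sym_arc A v w" | "nonsym_arc A u v" "nonsym_arc A v w"
    using uv vw unfolding sym_arc_def nonsym_arc_def by blast
  then show "(u, w) \<in> A"
  proof cases
    case 1
    then show ?thesis
      using sym_simplicialD[OF simpl _ _ \<open>u \<noteq> w\<close>] unfolding sym_arc_def by blast
  next
    case 2
    \<comment> \<open>otherwise v, w, u would be a detour from v\<close>
    then have "sym_arc A v u"
      unfolding sym_arc_def by blast
    with 2 no_out show ?thesis
      using nonsym_out_sym_adjacent unfolding detour_def adjacent_def nonsym_arc_def by blast
  next
    case 3
    then have "sym_arc A w v"
      unfolding sym_arc_def by blast
    with 3 no_in show ?thesis
      using nonsym_in_sym_adjacent unfolding detour_def adjacent_def nonsym_arc_def by blast
  next
    case 4
    then show ?thesis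
      by (rule nonsym_arc_trans)
  qed
qed

lemma detour_out_nbrs_less:
  assumes "detour A x a y"
  shows "card (out_nbrs A a) < card (out_nbrs A x)"
proof (rule psubset_card_mono[OF finite_out_nbrs])
  have "(a, w) \<in> A \<Longrightarrow> (x, w) \<in> A" for w
    using assms detour_sym_nbr nonsym_arc_trans unfolding detour_def sym_arc_def nonsym_arc_def
    by blast
  moreover have "(x, a) \<in> A" "(a, a) \<notin> A"
    using assms loop_free unfolding detour_def nonsym_arc_def by blast+
  ultimately show "out_nbrs A a \<subset> out_nbrs A x"
    unfolding out_nbrs_def by blast
qed

lemma detour_in_nbrs_less:
  assumes "detour A x a y"
  shows "card (in_nbrs A a) < card (in_nbrs A y)"
proof (rule psubset_card_mono[OF finite_in_nbrs])
  have "(u, a) \<in> A \<Longrightarrow> (u, y) \<in> A" for u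
    using assms detour_sym_nbr nonsym_arc_trans unfolding detour_def sym_arc_def nonsym_arc_def
    by blast
  moreover have "(a, y) \<in> A" "(a, a) \<notin> A"
    using assms loop_free unfolding detour_def nonsym_arc_def by blast+
  ultimately show "in_nbrs A a \<subset> in_nbrs A y"
    unfolding in_nbrs_def by blast
qed

lemma detour_via_sym_simplicial:
  assumes detour: "detour A x a y" and simpl: "sym_simplicial x \<or> sym_simplicial y"
  shows "\<exists>v. sym_simplicial v \<and> detour A x v y"
proof -
  have xy: "sym_arc A x y"
    using detour unfolding detour_def by blast
  \<comment> \<open>The middle vertices C of detours from x to y form a union of components of S(D)
    minus the closed neighbourhood of the end c that is not known to be simplicial in S(D).\<close>
  define c where "c = (if sym_simplicial x then y else x)"
  define C where "C = {v \<in> V. detour A x v y}"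
  have "\<exists>v\<in>C. sym_simplicial v"
  proof (rule chordal_simplicial_beyond_nbhd[OF sym_sym_arcs finite_V chordal_sym])
    show "c \<in> V" "C \<subseteq> V"
      using xy arc_in_V unfolding c_def C_def sym_arc_def by auto
    show "C \<noteq> {}"
      using detour arc_in_V unfolding C_def detour_def nonsym_arc_def by blast
    show "v \<noteq> c \<and> (c, v) \<notin> sym_arcs A" if "v \<in> C" for v
      using that unfolding C_def c_def detour_def nonsym_arc_def sym_arcs_def by auto
    show "d \<in> C \<or> (c, d) \<in> sym_arcs A"
      if u: "u \<in> C" and d: "d \<in> V" and ud: "(u, d) \<in> sym_arcs A" for u d
    proof -
      have xuy: "detour A x u y" and "sym_arc A u d"
        using u ud unfolding C_def sym_arcs_def sym_arc_def by auto
      then have xd: "(x, d) \<in> A" and dy: "(d, y) \<in> A"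
        using detour_sym_nbr by blast+
      have "d \<noteq> x" "d \<noteq> y"
        using xuy \<open>sym_arc A u d\<close> unfolding detour_def sym_arc_def nonsym_arc_def by auto
      consider "nonsym_arc A x d" "nonsym_arc A d y" | "sym_arc A x d" | "sym_arc A d y"
        using xd dy unfolding sym_arc_def nonsym_arc_def by blast
      then show ?thesis
      proof cases
        case 1
        then have "d \<in> C"
          using d xy unfolding C_def detour_def by blast
        then show ?thesis ..
      next
        case 2
        then have "sym_arc A c d"
          using sym_simplicialD[of x y d] xy \<open>d \<noteq> y\<close> unfolding c_def sym_arc_def by auto
        then show ?thesis
          unfolding sym_arcs_def sym_arc_def by blast
      next
        case 3
        then have "sym_arc A c d"
          using sym_simplicialD[of y d x] simpl xy \<open>d \<noteq> x\<close> unfolding c_def sym_arc_def by auto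
        then show ?thesis
          unfolding sym_arcs_def sym_arc_def by blast
      qed
    qed
  qed
  then show ?thesis
    unfolding C_def by blast
qed

lemma detour_exchange:
  assumes vap: "detour A v a p" and qvw: "detour A q v w" and simpl: "sym_simplicial w"
  shows "detour A w a p \<or> detour A q a w"
proof -
  have vp: "sym_arc A v p" and va: "nonsym_arc A v a" and ap: "nonsym_arc A a p"
    and qw: "sym_arc A q w" and qv: "nonsym_arc A q v" and vw: "nonsym_arc A v w"
    using vap qvw unfolding detour_def by blast+
  have "a \<noteq> w"
  proof
    assume "a = w"
    with vp qw va ap qv nonsym_in_sym_adjacent[OF qv vp] show False
      using square_ends_nonadjacent[of v p w q] unfolding adjacent_def sym_arc_def by blast
  qed
  have qp: "(q, p) \<in> A" and pw: "(p, w) \<in> A"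
    using detour_sym_nbr[OF qvw vp] by blast+
  have "adjacent A a w"
  proof (cases "(w, p) \<in> A")
    case True
    then have "sym_arc A p w"
      using pw unfolding sym_arc_def by blast
    then show ?thesis
      by (rule nonsym_in_sym_adjacent[OF ap])
  next
    case False
    then have "nonsym_arc A p w"
      using pw unfolding nonsym_arc_def by blast
    then show ?thesis
      using nonsym_arc_trans[OF ap] unfolding adjacent_def by blast
  qed
  then consider "sym_arc A a w" | "nonsym_arc A w a" | "nonsym_arc A a w"
    unfolding adjacent_def sym_arc_def nonsym_arc_def by blast
  then show ?thesis
  proof cases
    case 1
    \<comment> \<open>impossible: w would join its neighbours a and p in S(D), but a p is non-symmetric\<close>
    then have "sym_arc A w p"
      using detour_sym_nbr[OF vap] pw unfolding sym_arc_def by blast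
    with 1 simpl ap have False
      using sym_simplicialD[of w a p] unfolding sym_arc_def nonsym_arc_def by blast
    then show ?thesis ..
  next
    case 2
    then have "sym_arc A w p"
      using nonsym_arc_trans[OF 2 ap] pw unfolding sym_arc_def by blast
    with 2 ap show ?thesis
      unfolding detour_def by blast
  next
    case 3
    have "(a, q) \<notin> A"
    proof
      assume "(a, q) \<in> A"
      then have "sym_arc A a q"
        using nonsym_arc_trans[OF qv va] unfolding sym_arc_def by blast
      then show False
        using detour_sym_nbr[OF vap] qv unfolding nonsym_arc_def by blast
    qed
    then have "nonsym_arc A q a"
      using nonsym_arc_trans[OF qv va] unfolding nonsym_arc_def by blast
    with 3 qw show ?thesis
      unfolding detour_def by blast
  qed
qed

text \<open>A minimiser of the out-degree starts no detour, because the middle vertex of a detour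
  has smaller out-degree and can be chosen simplicial in S(D).\<close>
lemma sym_simplicial_without_out_detour:
  assumes "Q v\<^sub>0" "sym_simplicial v\<^sub>0"
    and closed: "\<And>v a p. Q v \<Longrightarrow> sym_simplicial a \<Longrightarrow> detour A v a p \<Longrightarrow> Q a"
  shows "\<exists>v. Q v \<and> sym_simplicial v \<and> (\<nexists>a p. detour A v a p)"
proof -
  obtain v where v: "Q v" "sym_simplicial v"
    and min: "\<And>u. Q u \<and> sym_simplicial u \<Longrightarrow> card (out_nbrs A v) \<le> card (out_nbrs A u)"
    using ex_has_least_nat[of "\<lambda>u. Q u \<and> sym_simplicial u" v\<^sub>0 "\<lambda>u. card (out_nbrs A u)"] assms(1,2)
    by blast
  have "\<nexists>a p. detour A v a p"
  proof
    assume "\<exists>a p. detour A v a p"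
    then obtain a p where "detour A v a p"
      by blast
    then obtain a' where a': "sym_simplicial a'" "detour A v a' p"
      using detour_via_sym_simplicial v(2) by blast
    then have "Q a'"
      using closed v(1) by blast
    with a' min show False
      using detour_out_nbrs_less[OF a'(2)] by fastforce
  qed
  with v show ?thesis
    by blast
qed

lemma exists_di_simplicial:
  assumes "V \<noteq> {}"
  shows "\<exists>v\<in>V. di_simplicial A v"
proof -
  let ?good = "\<lambda>u. u \<in> V \<and> sym_simplicial u \<and> (\<nexists>a p. detour A u a p)"
  obtain v\<^sub>0 where "v\<^sub>0 \<in> V" "sym_simplicial v\<^sub>0"
    using chordal_sym subset_refl assms by (rule chordal_simplicial)
  then obtain b\<^sub>0 where "?good b\<^sub>0"
    using sym_simplicial_without_out_detour[of "\<lambda>u. u \<in> V"] arc_in_V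
    unfolding detour_def nonsym_arc_def by blast
  then obtain b where b: "?good b"
    and min: "\<And>u. ?good u \<Longrightarrow> card (in_nbrs A b) \<le> card (in_nbrs A u)"
    using ex_has_least_nat[of ?good b\<^sub>0 "\<lambda>u. card (in_nbrs A u)"] by blast
  have "\<nexists>c a. detour A c a b"
  proof
    assume "\<exists>c a. detour A c a b"
    then obtain c a where "detour A c a b"
      by blast
    then obtain v\<^sub>0 where "sym_simplicial v\<^sub>0" "detour A c v\<^sub>0 b"
      using detour_via_sym_simplicial b by blast
    \<comment> \<open>by detour_exchange, and since b starts no detour, the middle vertices of detours
      ending in b are closed under the step of sym_simplicial_without_out_detour\<close>
    moreover have "\<exists>c. detour A c a b"
      if "\<exists>c. detour A c v b" "sym_simplicial a" "detour A v a p" for v a p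
      using that detour_exchange b by blast
    ultimately obtain v c' where v: "detour A c' v b" "sym_simplicial v" "\<nexists>a p. detour A v a p"
      using sym_simplicial_without_out_detour[of "\<lambda>v. \<exists>c. detour A c v b"] by blast
    then have "?good v"
      using arc_in_V unfolding detour_def nonsym_arc_def by blast
    with min show False
      using detour_in_nbrs_less[OF v(1)] by fastforce
  qed
  with b show ?thesis
    using di_simplicialI by blast
qed

lemma obstruction_free_wqt_digraph_induced_arcs:
  assumes "X \<subseteq> V"
  shows "obstruction_free_wqt_digraph X (induced_arcs A X)"
proof
  show "digraph X (induced_arcs A X)"
    using digraph assms by (rule digraph_induced_arcs)
  show "weakly_quasi_transitive X (induced_arcs A X)"
    using wqt assms by (rule weakly_quasi_transitive_induced_arcs)
  show "chordal X (sym_arcs (induced_arcs A X))"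
    unfolding sym_arcs_induced_arcs using chordal_sym assms by (rule chordal_induced_arcs)
qed (use assms no_F_a no_F_b no_F_c no_F_d contains_induced_induced_arcs in blast)+

theorem chordal: "chordal V A"
  unfolding chordal_def
  using obstruction_free_wqt_digraph.exists_di_simplicial[OF obstruction_free_wqt_digraph_induced_arcs]
  by blast

end

theorem theorem3p3:
  fixes V :: "'a set" and A :: "('a \<times> 'a) set"
  assumes "digraph V A" and "weakly_quasi_transitive V A"
  shows "chordal V A \<longleftrightarrow>
           (chordal V (sym_arcs A) \<and>
            \<not> contains_induced V A {1,2,3,4} F_a \<and>
            \<not> contains_induced V A {1,2,3,4} F_b \<and>
            \<not> contains_induced V A {1,2,3,4} F_c \<and>
            \<not> contains_induced V A {1,2,3} F_d)"
proof -
  have "wqt_digraph V A"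
    using assms by unfold_locales
  then show ?thesis
    using chordal_sym_arcs chordal_induced_copy obstructions_not_chordal
      obstruction_free_wqt_digraph.chordal[OF obstruction_free_wqt_digraph.intro]
    unfolding obstruction_free_wqt_digraph_axioms_def by meson
qed

end
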